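(* Let $f:\mathbb{R}^n\to\mathbb{R}$ be twice continuously differentiable, $x_0\in\mathbb{R}^n$, $S_f=\{x: f(x)\le f(x_0)\}$. Assume $\|\nabla f(x)-\nabla f(y)\|\le L_C\|x-y\|$ for all $x,y\in S_f$, that there are constants $M\ge m>0$ with $M\|z\|^2\ge z^{T}\nabla^2 f(x)z\ge m\|z\|^2$ for all $x\in S_f$, $z\in\mathbb{R}^n$, and that $f$ is bounded below on $S_f$. Let $\{x_k\}$ be generated by the Eptctr algorithm described in the context and $g_k=\nabla f(x_k)$. Then $\liminf_{k\to\infty}\|g_k\| = 0$.
   Context: Eptctr algorithm (explicit pseudo-transient continuation with trust-region updating and switching preconditioning). Parameters: $\eta_a=10^{-6}$, $\eta_1=0.25$, $\gamma_1=2$, $\eta_2=0.75$, $\gamma_2=0.5$, $\theta=10^{-6}$, initial $\Delta t_0=10^{-2}$, counter $K_{bad}=0$, $y_{-1}=s_{-1}=0$. Notation: $g_k=\nabla f(x_k)$, $B_k=\nabla^2 f(x_k)$. Initially $s_0^N$ solves $B_0 s_0^N=-g_0$. At iteration $k$: if the previous trial step was accepted (or $k=0$), compute the direction $s_k^N$ as follows: if $|s_{k-1}^{T}y_{k-1}|>\theta\|s_{k-1}\|^2$ and $K_{bad}<5$, set $s_k^N=-H_kg_k$ with $H_k = I - \frac{y_{k-1}s_{k-1}^{T}+s_{k-1}y_{k-1}^{T}}{y_{k-1}^{T}s_{k-1}} + 2\frac{\|y_{k-1}\|^2}{(y_{k-1}^{T}s_{k-1})^2}s_{k-1}s_{k-1}^{T}$;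 otherwise solve $B_k s_k^N=-g_k$. If the previous trial step was rejected, the previous direction is reused. Set $s_k=\frac{\Delta t_k}{1+\Delta t_k}s_k^N$ and compute $\rho_k=\frac{f(x_k)-f(x_k+s_k)}{m_k(0)-m_k(s_k)}$ with $m_k(s)=\frac{1+0.5\Delta t_k}{1+\Delta t_k}g_k^{T}s$. If $\rho_k\le\eta_a$ the step is rejected ($x_{k+1}=x_k$, and the pair $(s,y)$ used for $H$ is not changed); otherwise it is accepted: $x_{k+1}=x_k+s_k$, $y_k=g_{k+1}-g_k$, $s_k=x_{k+1}-x_k$. Time step update: if $|1-\rho_k|\ge\eta_2$ then $K_{bad}\leftarrow K_{bad}+1$ and $\Delta t_{k+1}=\gamma_2\Delta t_k$; else if $|1-\rho_k|\ge\eta_1$ then $\Delta t_{k+1}=\Delta t_k$; else $\Delta t_{k+1}=\gamma_1\Delta t_k$. The algorithm is considered as generating an infinite sequence (the stopping test $\|g_k\|\le\epsilon$ is not triggered). *)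

theory Defs
  imports "HOL-Analysis.Analysis"
begin

definition eta_a :: real where "eta_a = 1 / 1000000"
definition eta_1 :: real where "eta_1 = 0.25"
definition gamma_1 :: real where "gamma_1 = 2"
definition eta_2 :: real where "eta_2 = 0.75"
definition gamma_2 :: real where "gamma_2 = 0.5"
definition theta :: real where "theta = 1 / 1000000"
definition dt_init :: real where "dt_init = 1 / 100"

definition outer :: "real^'n \<Rightarrow> real^'n \<Rightarrow> real^'n^'n" where
  "outer u v = (\<chi> i j. u $ i * v $ j)"

definition H_mat :: "real^'n \<Rightarrow> real^'n \<Rightarrow> real^'n^'n" where
  "H_mat s y = mat 1 - (1 / (y \<bullet> s)) *\<^sub>R (outer y s + outer s y)
      + (2 * (norm y)\<^sup>2 / (y \<bullet> s)\<^sup>2) *\<^sub>R outer s s"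

text \<open>State of the algorithm at iteration k:
  current iterate x_k, time step dt_k, counter K_bad, last accepted pair (s,y)
  used for H, previous search direction s^N, and whether the previous trial step
  was accepted (True at k = 0).\<close>
record 'n ept_state =
  xk   :: "real^'n"
  dtk  :: real
  kbad :: nat
  sp   :: "real^'n"
  yp   :: "real^'n"
  dirN :: "real^'n"
  acc  :: bool

text \<open>One iteration; g is the gradient and B the Hessian of f.\<close>
definition ept_step ::
  "(real^'n \<Rightarrow> real) \<Rightarrow> (real^'n \<Rightarrow> real^'n) \<Rightarrow> (real^'n \<Rightarrow> real^'n^'n)
    \<Rightarrow> 'n ept_state \<Rightarrow> 'n ept_state" where
  "ept_step f g B st =
    (let x = xk st; dt = dtk st; gk = g x;
         dN = (if acc st then
                 (if \<bar>sp st \<bullet> yp st\<bar> > theta * (norm (sp st))\<^sup>2 \<and> kbad st < 5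
                  then - (H_mat (sp st) (yp st) *v gk)
                  else matrix_inv (B x) *v (- gk))
               else dirN st);
         s = (dt / (1 + dt)) *\<^sub>R dN;
         pred = - ((1 + 0.5 * dt) / (1 + dt) * (gk \<bullet> s));
         rho = (f x - f (x + s)) / pred;
         accepted = (rho > eta_a);
         x' = (if accepted then x + s else x);
         s' = (if accepted then x' - x else sp st);
         y' = (if accepted then g x' - gk else yp st);
         kb' = (if \<bar>1 - rho\<bar> \<ge> eta_2 then kbad st + 1 else kbad st);
         dt' = (if \<bar>1 - rho\<bar> \<ge> eta_2 then gamma_2 * dt
                else if \<bar>1 - rho\<bar> \<ge> eta_1 then dt else gamma_1 * dt)
     in \<lparr>xk = x', dtk = dt', kbad = kb', sp = s', yp = y', dirN = dN, acc = accepted\<rparr>)"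

text \<open>Initial state: K_bad = 0, y_{-1} = s_{-1} = 0, dt_0 = 10^-2; the flag acc = True
  forces computation of a direction at k = 0 (which is the Newton direction since
  s_{-1} = 0).\<close>
definition ept_init :: "real^'n \<Rightarrow> 'n ept_state" where
  "ept_init x0 = \<lparr>xk = x0, dtk = dt_init, kbad = 0, sp = 0, yp = 0, dirN = 0, acc = True\<rparr>"

definition eptctr_iter ::
  "(real^'n \<Rightarrow> real) \<Rightarrow> (real^'n \<Rightarrow> real^'n) \<Rightarrow> (real^'n \<Rightarrow> real^'n^'n)
    \<Rightarrow> real^'n \<Rightarrow> nat \<Rightarrow> real^'n" where
  "eptctr_iter f g B x0 k = xk ((ept_step f g B ^^ k) (ept_init x0))"

end

(*
  Every direction the algorithm uses is gradient related: -g.d >= a |g|^2 and |d| <= b |g|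
  for fixed a, b > 0. For the quasi-Newton direction -H g this follows from the safeguard
  |s.y| > theta |s|^2 together with |y| <= L |s|, which holds because accepted steps stay in the
  sublevel set. For the Newton direction it follows from the lower curvature bound m and the
  bound |B x h| <= L |h|, which the Lipschitz gradient forces at every non-stationary point of
  the sublevel set.

  Along a gradient-related direction the ratio rho_k differs from 1 by less than 1/4 as soon as
  the time step is below a fixed threshold, so such a step is accepted and the time step is not
  decreased. Hence if |g_k| >= eps eventually, the time steps stay bounded away from 0, infinitely
  many steps are accepted, and each of them decreases f by a fixed positive amount, contradicting
  boundedness from below.
*)

theory Submission
  imports Defs
begin

section \<open>The quasi-Newton and Newton directions\<close>

lemma outer_mult_vec: "outer u v *v w = (v \<bullet> w) *\<^sub>R (u::real^'n)"
  by (simp add: vec_eq_iff outer_def matrix_vector_mult_def inner_vec_def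
      sum_distrib_left mult.assoc mult.commute mult.left_commute)

lemma H_mat_mult_vec:
  "H_mat s y *v v = v - (1 / (y \<bullet> s)) *\<^sub>R ((s \<bullet> v) *\<^sub>R y + (y \<bullet> v) *\<^sub>R s)
      + (2 * (norm y)\<^sup>2 / (y \<bullet> s)\<^sup>2) *\<^sub>R ((s \<bullet> v) *\<^sub>R s)"
  unfolding H_mat_def
  by (simp add: matrix_vector_mult_add_rdistrib matrix_vector_mult_diff_rdistrib
      scaleR_matrix_vector_assoc[symmetric] outer_mult_vec)

text \<open>For \<open>y \<bullet> s = 0\<close> the convention \<open>x / 0 = 0\<close> makes \<open>H_mat s y\<close> the identity, and the
  identity below still holds.\<close>

lemma H_mat_quadratic_form:
  fixes s y v :: "real^'n"
  defines "p \<equiv> (s \<bullet> v) / (y \<bullet> s)"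
  shows "v \<bullet> (H_mat s y *v v) = (norm (v - p *\<^sub>R y))\<^sup>2 + (p * norm y)\<^sup>2"
proof (cases "y \<bullet> s = 0")
  case True
  then show ?thesis by (simp add: H_mat_mult_vec p_def power2_norm_eq_inner)
next
  case False
  have "norm y * norm y = y \<bullet> y"
    by (simp add: dot_square_norm power2_eq_square)
  with False show ?thesis
    unfolding H_mat_mult_vec p_def power2_norm_eq_inner
    by (simp add: inner_diff_left inner_diff_right inner_add_right inner_commute
        power_mult_distrib) (simp add: field_simps power2_eq_square)
qed

lemma H_mat_descent:
  fixes s y v :: "real^'n"
  shows "(norm v)\<^sup>2 / 2 \<le> v \<bullet> (H_mat s y *v v)"
proof -
  define p where "p = (s \<bullet> v) / (y \<bullet> s)"
  have "norm v \<le> norm (v - p *\<^sub>R y) + \<bar>p\<bar> * norm y"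
    using norm_triangle_ineq[of "v - p *\<^sub>R y" "p *\<^sub>R y"] by simp
  then have "(norm v)\<^sup>2 \<le> (norm (v - p *\<^sub>R y) + \<bar>p\<bar> * norm y)\<^sup>2"
    by (simp add: power_mono)
  also have "\<dots> \<le> 2 * ((norm (v - p *\<^sub>R y))\<^sup>2 + (p * norm y)\<^sup>2)"
    using sum_power2_ge_zero[of "norm (v - p *\<^sub>R y) - \<bar>p\<bar> * norm y" 0]
    by (simp add: power2_eq_square algebra_simps abs_mult_self_eq)
  finally show ?thesis
    by (simp add: H_mat_quadratic_form p_def)
qed

lemma norm_H_mat_mult_vec_le:
  fixes s y v :: "real^'n"
  defines "r \<equiv> norm y * norm s / \<bar>y \<bullet> s\<bar>"
  shows "norm (H_mat s y *v v) \<le> (1 + 2 * r + 2 * r\<^sup>2) * norm v"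
proof (cases "y \<bullet> s = 0")
  case True
  then show ?thesis
    by (simp add: H_mat_mult_vec r_def)
next
  case False
  define q where "q = y \<bullet> s"
  have "norm (H_mat s y *v v) \<le> norm v + \<bar>1 / q\<bar> * (\<bar>s \<bullet> v\<bar> * norm y + \<bar>y \<bullet> v\<bar> * norm s)
      + (2 * (norm y)\<^sup>2 / q\<^sup>2) * (\<bar>s \<bullet> v\<bar> * norm s)"
  proof -
    have "norm ((1 / q) *\<^sub>R ((s \<bullet> v) *\<^sub>R y + (y \<bullet> v) *\<^sub>R s))
        \<le> \<bar>1 / q\<bar> * (\<bar>s \<bullet> v\<bar> * norm y + \<bar>y \<bullet> v\<bar> * norm s)"
      unfolding norm_scaleR
      by (intro mult_left_mono order.trans[OF norm_triangle_ineq]) auto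
    moreover have "norm ((2 * (norm y)\<^sup>2 / q\<^sup>2) *\<^sub>R ((s \<bullet> v) *\<^sub>R s))
        = (2 * (norm y)\<^sup>2 / q\<^sup>2) * (\<bar>s \<bullet> v\<bar> * norm s)"
      by (simp add: abs_mult)
    ultimately show ?thesis
      unfolding H_mat_mult_vec q_def[symmetric]
      by (smt (verit) norm_triangle_ineq norm_triangle_ineq4)
  qed
  also have "\<dots> \<le> norm v + \<bar>1 / q\<bar> * (norm s * norm v * norm y + norm y * norm v * norm s)
      + (2 * (norm y)\<^sup>2 / q\<^sup>2) * (norm s * norm v * norm s)"
    by (intro add_mono mult_left_mono mult_right_mono Cauchy_Schwarz_ineq2) auto
  also have "\<dots> = (1 + 2 * r + 2 * r\<^sup>2) * norm v"
    using False by (simp add: r_def q_def field_simps power2_eq_square)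
  finally show ?thesis .
qed

lemma H_mat_norm_bound:
  fixes s y v :: "real^'n"
  assumes th: "0 < th" and curv: "th * (norm s)\<^sup>2 < \<bar>s \<bullet> y\<bar>" and y: "norm y \<le> L * norm s"
  shows "norm (H_mat s y *v v) \<le> (1 + 2 * L / th + 2 * (L / th)\<^sup>2) * norm v"
proof -
  define r where "r = norm y * norm s / \<bar>y \<bullet> s\<bar>"
  have "0 \<le> th * (norm s)\<^sup>2"
    using th by simp
  then have q: "0 < \<bar>y \<bullet> s\<bar>" "th * (norm s)\<^sup>2 < \<bar>y \<bullet> s\<bar>"
    using curv by (simp_all add: inner_commute)
  have "0 \<le> L * norm s"
    using y norm_ge_zero order_trans by blast
  moreover have "s \<noteq> 0"
    using q(1) by auto
  ultimately have L0: "0 \<le> L"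
    by (simp add: zero_le_mult_iff)
  have "norm y * norm s \<le> L * (norm s)\<^sup>2"
    using mult_right_mono[OF y, of "norm s"] by (simp add: power2_eq_square mult.assoc)
  also have "\<dots> \<le> (L / th) * \<bar>y \<bullet> s\<bar>"
    using mult_left_mono[OF less_imp_le[OF q(2)] L0] th by (simp add: field_simps)
  finally have r_le: "r \<le> L / th"
    using q(1) by (simp add: r_def field_simps)
  moreover have "r\<^sup>2 \<le> (L / th)\<^sup>2"
    using r_le by (intro power_mono) (simp_all add: r_def)
  ultimately have "1 + 2 * r + 2 * r\<^sup>2 \<le> 1 + 2 * L / th + 2 * (L / th)\<^sup>2"
    by simp
  then have "(1 + 2 * r + 2 * r\<^sup>2) * norm v \<le> (1 + 2 * L / th + 2 * (L / th)\<^sup>2) * norm v"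
    by (rule mult_right_mono) simp
  with norm_H_mat_mult_vec_le[of s y v, folded r_def] show ?thesis
    by (rule order_trans)
qed

definition gradient_related :: "real \<Rightarrow> real \<Rightarrow> 'a::real_inner \<Rightarrow> 'a \<Rightarrow> bool" where
  "gradient_related a b v d \<longleftrightarrow> v \<bullet> d \<le> - a * (norm v)\<^sup>2 \<and> norm d \<le> b * norm v"

lemma gradient_related_mono:
  "gradient_related a b v d \<Longrightarrow> a' \<le> a \<Longrightarrow> b \<le> b' \<Longrightarrow> gradient_related a' b' v d"
  unfolding gradient_related_def
  by (meson mult_right_mono neg_le_iff_le norm_ge_zero order.trans zero_le_power2)

lemma gradient_related_zero_iff: "gradient_related a b 0 d \<longleftrightarrow> d = 0"
  by (simp add: gradient_related_def)

lemma gradient_related_H_mat: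
  assumes "0 < th" and "th * (norm s)\<^sup>2 < \<bar>s \<bullet> y\<bar>" and "norm y \<le> L * norm s"
  shows "gradient_related (1/2) (1 + 2 * L / th + 2 * (L / th)\<^sup>2) v (- (H_mat s y *v v))"
  using H_mat_descent[of v s y] H_mat_norm_bound[OF assms, of v]
  by (simp add: gradient_related_def)

lemma matrix_inv_mult_vec_cancel:
  fixes A :: "real^'n^'n"
  assumes "\<And>z. A *v z = 0 \<Longrightarrow> z = 0"
  shows "A *v (matrix_inv A *v v) = v"
proof -
  have "invertible A"
    using assms matrix_left_invertible_ker invertible_left_inverse by blast
  then have "A ** matrix_inv A = mat 1"
    unfolding invertible_def matrix_inv_def by (rule someI2_ex) simp
  then show ?thesis by (simp add: matrix_vector_mul_assoc)
qed

lemma gradient_related_newton: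
  fixes A :: "real^'n^'n"
  assumes m: "0 < m" and L: "0 < L"
    and coercive: "\<And>z. m * (norm z)\<^sup>2 \<le> z \<bullet> (A *v z)"
    and bounded: "\<And>z. norm (A *v z) \<le> L * norm z"
  shows "gradient_related (m / L\<^sup>2) (1 / m) v (matrix_inv A *v (- v))"
proof -
  define d where "d = matrix_inv A *v (- v)"
  have ker: "z = 0" if "A *v z = 0" for z
    using coercive[of z] that m by (simp add: mult_le_0_iff)
  have "A *v d = - v"
    unfolding d_def by (rule matrix_inv_mult_vec_cancel[OF ker])
  then have curv: "m * (norm d)\<^sup>2 \<le> - (v \<bullet> d)"
    using coercive[of d] by (simp add: inner_commute)
  have "norm v \<le> L * norm d"
    using bounded[of d] \<open>A *v d = - v\<close> by simp
  then have "(norm v)\<^sup>2 \<le> L\<^sup>2 * (norm d)\<^sup>2"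
    by (metis norm_ge_zero power_mono power_mult_distrib)
  then have "m / L\<^sup>2 * (norm v)\<^sup>2 \<le> m * (norm d)\<^sup>2"
    using L m by (simp add: field_simps)
  moreover have "m * norm d \<le> norm v"
  proof -
    have "m * (norm d)\<^sup>2 \<le> norm d * norm v"
      using curv Cauchy_Schwarz_ineq2[of v d] by (simp add: abs_le_iff mult.commute)
    then show ?thesis by (cases "d = 0") (auto simp: power2_eq_square)
  qed
  ultimately show ?thesis
    using curv m by (simp add: gradient_related_def d_def[symmetric] field_simps)
qed

lemma DERIV_neg_on_sublevel_imp_le_start:
  fixes \<phi> \<phi>' :: "real \<Rightarrow> real"
  assumes deriv: "\<And>t. DERIV \<phi> t :> \<phi>' t"
    and neg: "\<And>t. a \<le> t \<Longrightarrow> t \<le> b \<Longrightarrow> \<phi> t \<le> \<phi> a \<Longrightarrow> \<phi>' t < 0"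
    and t: "a \<le> t" "t \<le> b"
  shows "\<phi> t \<le> \<phi> a"
proof (rule ccontr)
  assume above: "\<not> \<phi> t \<le> \<phi> a"
  define Z where "Z = {a..t} \<inter> {u. \<phi> u \<le> \<phi> a}"
  have "continuous_on UNIV \<phi>"
    using deriv by (intro continuous_at_imp_continuous_on) (auto intro: DERIV_isCont)
  then have "closed Z"
    unfolding Z_def by (intro closed_Int closed_atLeastAtMost closed_Collect_le continuous_on_const)
  moreover have "a \<in> Z" "bdd_above Z"
    using t by (auto simp: Z_def)
  ultimately have TZ: "Sup Z \<in> Z"
    using closed_contains_Sup by blast
  define T where "T = Sup Z"
  have T: "a \<le> T" "T < t" "\<phi> T \<le> \<phi> a"
    using TZ above by (auto simp: Z_def T_def order.order_iff_strict)
  then obtain d where d: "0 < d" "\<And>h. 0 < h \<Longrightarrow> h < d \<Longrightarrow> \<phi> (T + h) < \<phi> T"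
    using DERIV_neg_dec_right[OF deriv neg[of T]] t by auto
  define h where "h = min d (t - T) / 2"
  have h: "0 < h" "h < d" "T + h \<le> t"
    using d(1) T(2) by (auto simp: h_def min_def field_simps)
  then have "\<phi> (T + h) \<le> \<phi> a"
    using d(2) T(3) by fastforce
  then have "T + h \<in> Z"
    using h T by (simp add: Z_def)
  then have "T + h \<le> T"
    unfolding T_def by (rule cSup_upper) fact
  then show False
    using d T by (simp add: h_def)
qed

lemma decseq_bdd_below_eventually_small_decrease:
  fixes u :: "nat \<Rightarrow> real"
  assumes "decseq u" and "\<And>k. c \<le> u k" and "0 < \<Delta>"
  shows "\<exists>K. \<forall>k\<ge>K. u k - u (Suc k) < \<Delta>"
proof -
  obtain l where "u \<longlonglongrightarrow> l"
    using decseq_convergent[OF assms(1)] assms(2) by blast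
  then have "(\<lambda>k. u k - u (Suc k)) \<longlonglongrightarrow> l - l"
    by (intro tendsto_diff LIMSEQ_Suc)
  then have "eventually (\<lambda>k. u k - u (Suc k) < \<Delta>) sequentially"
    using assms(3) by (intro order_tendstoD(2)) simp_all
  then show ?thesis
    by (simp add: eventually_sequentially)
qed

lemma liminf_ereal_eq_0I:
  fixes u :: "nat \<Rightarrow> real"
  assumes nonneg: "\<And>k. 0 \<le> u k"
    and small: "\<And>\<epsilon> K. 0 < \<epsilon> \<Longrightarrow> \<exists>k\<ge>K. u k < \<epsilon>"
  shows "liminf (\<lambda>k. ereal (u k)) = 0"
proof (rule antisym)
  show "liminf (\<lambda>k. ereal (u k)) \<le> 0"
  proof (rule ccontr)
    assume "\<not> liminf (\<lambda>k. ereal (u k)) \<le> 0"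
    then have "0 < liminf (\<lambda>k. ereal (u k))"
      by simp
    then obtain \<epsilon> where \<epsilon>: "0 < ereal \<epsilon>" "ereal \<epsilon> < liminf (\<lambda>k. ereal (u k))"
      using ereal_dense2 by blast
    then have "eventually (\<lambda>k. ereal \<epsilon> < ereal (u k)) sequentially"
      by (intro less_LiminfD)
    then obtain K where "\<And>k. K \<le> k \<Longrightarrow> \<epsilon> < u k"
      by (auto simp: eventually_sequentially)
    then show False
      using small[of \<epsilon> K] \<epsilon>(1) by force
  qed
  show "0 \<le> liminf (\<lambda>k. ereal (u k))"
    using nonneg by (intro Liminf_bounded) simp
qed

definition ptc_step :: "real \<Rightarrow> 'a::real_vector \<Rightarrow> 'a" where
  "ptc_step dt d = (dt / (1 + dt)) *\<^sub>R d"

definition model_decrease :: "real \<Rightarrow> 'a::real_inner \<Rightarrow> 'a \<Rightarrow> real" where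
  "model_decrease dt v s = - ((1 + 0.5 * dt) / (1 + dt) * (v \<bullet> s))"

lemma model_decrease_ptc_step:
  assumes "0 \<le> dt"
  defines "\<tau> \<equiv> dt / (1 + dt)"
  shows "model_decrease dt v (ptc_step dt d) = (1 - \<tau> / 2) * (\<tau> * - (v \<bullet> d))"
  using assms by (simp add: model_decrease_def ptc_step_def field_simps)

lemma model_decrease_lower_bound:
  assumes d: "gradient_related a b v d" and a: "0 \<le> a" and dt: "0 < dt"
  shows "dt / (1 + dt) * a * (norm v)\<^sup>2 / 2 \<le> model_decrease dt v (ptc_step dt d)"
proof -
  define \<tau> where "\<tau> = dt / (1 + dt)"
  have \<tau>: "0 < \<tau>" "\<tau> \<le> 1"
    using dt by (simp_all add: \<tau>_def)
  have G: "a * (norm v)\<^sup>2 \<le> - (v \<bullet> d)"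
    using d by (simp add: gradient_related_def)
  have "0 \<le> a * (norm v)\<^sup>2"
    using a by simp
  with G \<tau>(1) have nonneg: "0 \<le> \<tau> * - (v \<bullet> d)"
    by (intro mult_nonneg_nonneg) simp_all
  have "\<tau> * (a * (norm v)\<^sup>2) \<le> \<tau> * - (v \<bullet> d)"
    using G \<tau>(1) by (intro mult_left_mono) simp_all
  moreover have "1 / 2 * (\<tau> * - (v \<bullet> d)) \<le> (1 - \<tau> / 2) * (\<tau> * - (v \<bullet> d))"
    using \<tau> nonneg by (intro mult_right_mono) simp_all
  ultimately have "\<tau> * (a * (norm v)\<^sup>2) / 2 \<le> (1 - \<tau> / 2) * (\<tau> * - (v \<bullet> d))"
    by linarith
  then show ?thesis
    using dt by (simp add: model_decrease_ptc_step \<tau>_def mult.assoc)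
qed

lemma norm_ptc_step_le:
  fixes dt :: real
  assumes d: "gradient_related a b v d" and a: "0 < a"
  defines "\<tau> \<equiv> dt / (1 + dt)"
  shows "(norm (ptc_step dt d))\<^sup>2 \<le> b\<^sup>2 / a * \<tau> * (\<tau> * - (v \<bullet> d))"
proof -
  have G: "a * (norm v)\<^sup>2 \<le> - (v \<bullet> d)" and nd: "norm d \<le> b * norm v"
    using d by (simp_all add: gradient_related_def)
  have "(norm d)\<^sup>2 \<le> (b * norm v)\<^sup>2"
    using power_mono[OF nd norm_ge_zero] .
  also have "\<dots> = b\<^sup>2 / a * (a * (norm v)\<^sup>2)"
    using a by (simp add: power_mult_distrib)
  also have "\<dots> \<le> b\<^sup>2 / a * - (v \<bullet> d)"
    using G a by (intro mult_left_mono) simp_all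
  finally have "\<tau>\<^sup>2 * (norm d)\<^sup>2 \<le> \<tau>\<^sup>2 * (b\<^sup>2 / a * - (v \<bullet> d))"
    by (rule mult_left_mono) simp
  then show ?thesis
    by (simp add: ptc_step_def \<tau>_def[symmetric] power_mult_distrib power2_eq_square algebra_simps)
qed

section \<open>Functions with Lipschitz gradient on a sublevel set\<close>

locale lipschitz_gradient_sublevel =
  fixes f :: "'a::real_inner \<Rightarrow> real" and g :: "'a \<Rightarrow> 'a" and c L :: real
  assumes gradient: "\<And>x. GDERIV f x :> g x"
    and lipschitz: "\<And>x y. f x \<le> c \<Longrightarrow> f y \<le> c \<Longrightarrow> norm (g x - g y) \<le> L * norm (x - y)"
    and L_pos: "0 < L"
begin

lemma DERIV_along_line: "DERIV (\<lambda>t. f (x + t *\<^sub>R s)) t :> g (x + t *\<^sub>R s) \<bullet> s"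
proof -
  have "((\<lambda>t. x + t *\<^sub>R s) has_derivative (\<lambda>u. u *\<^sub>R s)) (at t)"
    by (auto intro!: derivative_eq_intros)
  moreover have "(f has_derivative (\<lambda>h. h \<bullet> g (x + t *\<^sub>R s))) (at (x + t *\<^sub>R s))"
    using gradient by (simp add: gderiv_def)
  ultimately have "((\<lambda>t. f (x + t *\<^sub>R s)) has_derivative (\<lambda>u. (u *\<^sub>R s) \<bullet> g (x + t *\<^sub>R s))) (at t)"
    by (rule has_derivative_compose)
  moreover have "(\<lambda>u. (u *\<^sub>R s) \<bullet> g (x + t *\<^sub>R s)) = (*) (g (x + t *\<^sub>R s) \<bullet> s)"
    by (auto simp: inner_commute)
  ultimately show ?thesis
    by (simp add: has_field_derivative_def)
qed

lemma gradient_along_segment: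
  assumes "f x \<le> c" "f (x + t *\<^sub>R s) \<le> c" "0 \<le> t" "t \<le> 1"
  shows "\<bar>g (x + t *\<^sub>R s) \<bullet> s - g x \<bullet> s\<bar> \<le> L * (norm s)\<^sup>2"
proof -
  have "\<bar>g (x + t *\<^sub>R s) \<bullet> s - g x \<bullet> s\<bar> \<le> norm (g (x + t *\<^sub>R s) - g x) * norm s"
    by (metis Cauchy_Schwarz_ineq2 inner_diff_left)
  also have "\<dots> \<le> L * (t * norm s) * norm s"
    using lipschitz[OF assms(2,1)] assms(3) by (intro mult_right_mono) auto
  also have "\<dots> = t * (L * (norm s)\<^sup>2)"
    by (simp add: power2_eq_square)
  also have "\<dots> \<le> L * (norm s)\<^sup>2"
    using assms(3,4) L_pos by (intro mult_left_le_one_le) auto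
  finally show ?thesis .
qed

lemma descent_segment_in_sublevel:
  assumes x: "f x \<le> c" and small: "L * (norm s)\<^sup>2 < - (g x \<bullet> s)" and t: "0 \<le> t" "t \<le> 1"
  shows "f (x + t *\<^sub>R s) \<le> f x"
proof -
  have "g (x + u *\<^sub>R s) \<bullet> s < 0" if "0 \<le> u" "u \<le> 1" "f (x + u *\<^sub>R s) \<le> f x" for u
    using gradient_along_segment[of x u s] that x small by fastforce
  then show ?thesis
    using DERIV_neg_on_sublevel_imp_le_start[where \<phi> = "\<lambda>u. f (x + u *\<^sub>R s)"
        and \<phi>' = "\<lambda>u. g (x + u *\<^sub>R s) \<bullet> s" and a = 0 and b = 1, OF DERIV_along_line] t
    by simp
qed

lemma first_order_error_bound:
  assumes x: "f x \<le> c" and small: "L * (norm s)\<^sup>2 < - (g x \<bullet> s)"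
  shows "\<bar>f (x + s) - f x - g x \<bullet> s\<bar> \<le> L * (norm s)\<^sup>2"
proof -
  obtain z where z: "0 < z" "z < 1"
    and mvt: "f (x + 1 *\<^sub>R s) - f (x + 0 *\<^sub>R s) = (1 - 0) * (g (x + z *\<^sub>R s) \<bullet> s)"
    using MVT2[of 0 1 "\<lambda>t. f (x + t *\<^sub>R s)" "\<lambda>t. g (x + t *\<^sub>R s) \<bullet> s"] DERIV_along_line
    by force
  have "f (x + z *\<^sub>R s) \<le> c"
    using descent_segment_in_sublevel[OF x small, of z] z x by simp
  then show ?thesis
    using gradient_along_segment[OF x, of z s] z mvt by simp
qed

lemma ptc_ratio_close_to_one:
  assumes x: "f x \<le> c" and d: "gradient_related a b (g x) d" and a: "0 < a" and g0: "g x \<noteq> 0"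
    and dt: "0 < dt" "dt \<le> 1/16" "L * (b\<^sup>2 / a) * dt \<le> 1/16"
  defines "s \<equiv> ptc_step dt d"
  shows "\<bar>1 - (f x - f (x + s)) / model_decrease dt (g x) s\<bar> < 1/4"
proof -
  define \<tau> where "\<tau> = dt / (1 + dt)"
  define P where "P = \<tau> * - (g x \<bullet> d)"
  have \<tau>: "0 < \<tau>" "\<tau> \<le> dt"
    using dt(1) by (simp_all add: \<tau>_def field_simps)
  have "0 < a * (norm (g x))\<^sup>2"
    using a g0 by simp
  also have "\<dots> \<le> - (g x \<bullet> d)"
    using d by (simp add: gradient_related_def)
  finally have P: "0 < P"
    using \<tau>(1) unfolding P_def by (intro mult_pos_pos)
  have "0 \<le> L * (b\<^sup>2 / a)"
    using L_pos a by simp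
  then have "L * (b\<^sup>2 / a) * \<tau> \<le> 1/16"
    using mult_left_mono[OF \<tau>(2)] dt(3) by (meson order_trans)
  then have "L * (b\<^sup>2 / a) * \<tau> * P \<le> 1/16 * P"
    using P by (intro mult_right_mono) simp_all
  moreover have "L * (norm s)\<^sup>2 \<le> L * (b\<^sup>2 / a * \<tau> * P)"
    using norm_ptc_step_le[OF d a, of dt] L_pos
    by (intro mult_left_mono) (simp_all add: s_def \<tau>_def P_def)
  ultimately have Ls: "L * (norm s)\<^sup>2 \<le> P / 16"
    unfolding mult.assoc by linarith
  have gs: "g x \<bullet> s = - P"
    by (simp add: s_def ptc_step_def P_def \<tau>_def)
  then have R: "\<bar>f (x + s) - f x + P\<bar> \<le> P / 16"
    using first_order_error_bound[OF x, of s] Ls P by simp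
  have "\<tau> * P \<le> 1 / 16 * P"
    using \<tau> dt(2) P by (intro mult_right_mono) simp_all
  moreover have pred: "model_decrease dt (g x) s = P - \<tau> * P / 2"
    using dt by (simp add: s_def model_decrease_ptc_step \<tau>_def P_def algebra_simps)
  ultimately have pred_ge: "P / 2 \<le> model_decrease dt (g x) s"
    using P by linarith
  define q where "q = model_decrease dt (g x) s"
  have err: "\<bar>q - (f x - f (x + s))\<bar> < P / 8"
    using R P \<open>\<tau> * P \<le> 1 / 16 * P\<close> mult_pos_pos[OF \<tau>(1) P]
    unfolding q_def pred abs_le_iff abs_less_iff by (elim conjE, intro conjI; linarith)
  have q: "0 < q" "P / 2 \<le> q"
    using pred_ge P by (simp_all add: q_def)
  have "1 - (f x - f (x + s)) / q = (q - (f x - f (x + s))) / q"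
    using q by (simp add: diff_divide_distrib)
  then have "\<bar>1 - (f x - f (x + s)) / q\<bar> = \<bar>q - (f x - f (x + s))\<bar> / q"
    using q by (simp add: abs_divide)
  also have "\<dots> < P / 8 / q"
    using err q(1) by (rule divide_strict_right_mono)
  also have "\<dots> \<le> 1 / 4"
    using q by (simp add: field_simps)
  finally show ?thesis
    by (simp add: q_def)
qed

end

locale lipschitz_gradient_sublevel_hessian = lipschitz_gradient_sublevel +
  fixes H :: "'a::real_inner \<Rightarrow> 'a \<Rightarrow> 'a"
  assumes hessian: "\<And>x. (g has_derivative H x) (at x)"
begin

text \<open>The sublevel set may have empty interior, so the Lipschitz bound says nothing about \<open>H x\<close>
  directly. But small steps along a descent direction \<open>h\<close> stay in the sublevel set, which bounds
  \<open>H x h\<close>; a direction orthogonal to \<open>g x\<close> is the mean of two descent or ascent directions.\<close>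

lemma hessian_norm_bound_descent:
  assumes x: "f x \<le> c" and h: "g x \<bullet> h < 0"
  shows "norm (H x h) \<le> L * norm h"
proof (rule field_le_epsilon)
  interpret H: bounded_linear "H x"
    using hessian by (rule has_derivative_bounded_linear)
  have nh: "0 < norm h"
    using h by auto
  obtain \<delta> where \<delta>: "0 < \<delta>" "\<And>t. 0 < t \<Longrightarrow> t < \<delta> \<Longrightarrow> f (x + t *\<^sub>R h) < f x"
    using DERIV_neg_dec_right[OF DERIV_along_line[of x h 0]] h by auto
  fix e :: real
  assume "0 < e"
  then obtain r where r: "0 < r"
    "\<And>y. norm (y - x) < r \<Longrightarrow> norm (g y - g x - H x (y - x)) \<le> e / norm h * norm (y - x)"
    using hessian[of x] nh unfolding has_derivative_at_alt by (meson divide_pos_pos)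
  define t where "t = min \<delta> (r / norm h) / 2"
  have t: "0 < t" "t < \<delta>" "t * norm h < r"
    using \<delta>(1) r(1) nh by (auto simp: t_def min_def field_simps)
  have "f (x + t *\<^sub>R h) \<le> c"
    using \<delta>(2)[OF t(1,2)] x by simp
  from lipschitz[OF this x] t(1) have "norm (g (x + t *\<^sub>R h) - g x) \<le> L * (t * norm h)"
    by simp
  moreover have "norm (g (x + t *\<^sub>R h) - g x - t *\<^sub>R H x h) \<le> e / norm h * (t * norm h)"
    using r(2)[of "x + t *\<^sub>R h"] t by (simp add: H.scaleR)
  moreover have "norm (t *\<^sub>R H x h)
      \<le> norm (g (x + t *\<^sub>R h) - g x) + norm (g (x + t *\<^sub>R h) - g x - t *\<^sub>R H x h)"
    using norm_triangle_sub[of "t *\<^sub>R H x h" "g (x + t *\<^sub>R h) - g x"] by (simp add: norm_minus_commute)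
  ultimately have "t * norm (H x h) \<le> t * (L * norm h + e)"
    using t(1) nh by (simp add: algebra_simps)
  then show "norm (H x h) \<le> L * norm h + e"
    using t(1) by simp
qed

lemma hessian_norm_bound_transversal:
  assumes x: "f x \<le> c" and h: "g x \<bullet> h \<noteq> 0"
  shows "norm (H x h) \<le> L * norm h"
proof (cases "g x \<bullet> h < 0")
  case False
  interpret H: bounded_linear "H x"
    using hessian by (rule has_derivative_bounded_linear)
  from False h have "g x \<bullet> (- h) < 0"
    by simp
  from hessian_norm_bound_descent[OF x this] show ?thesis
    by (simp add: H.neg)
qed (rule hessian_norm_bound_descent[OF x])

lemma hessian_norm_bound:
  assumes x: "f x \<le> c" and g0: "g x \<noteq> 0"
  shows "norm (H x h) \<le> L * norm h"
proof -
  interpret H: bounded_linear "H x"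
    using hessian by (rule has_derivative_bounded_linear)
  show ?thesis
  proof (cases "g x \<bullet> h = 0")
    case True
    have ng: "0 < norm (g x)"
      using g0 by simp
    show ?thesis
    proof (rule field_le_epsilon)
      fix e :: real
      assume "0 < e"
      define t where "t = e / (L * norm (g x))"
      have t: "0 < t"
        using \<open>0 < e\<close> ng L_pos by (simp add: t_def)
      have "H x h = (1/2) *\<^sub>R (H x (h + t *\<^sub>R g x) + H x (h - t *\<^sub>R g x))"
        by (simp add: H.add H.diff scaleR_2[symmetric] del: scaleR_2)
      then have "norm (H x h) \<le> (1/2) * (norm (H x (h + t *\<^sub>R g x)) + norm (H x (h - t *\<^sub>R g x)))"
        by (simp add: norm_triangle_ineq)
      also have "\<dots> \<le> (1/2) * (L * norm (h + t *\<^sub>R g x) + L * norm (h - t *\<^sub>R g x))"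
        using True t g0 by (intro mult_left_mono add_mono hessian_norm_bound_transversal[OF x])
          (simp_all add: inner_add_right inner_diff_right)
      also have "\<dots> \<le> (1/2) * (L * (norm h + t * norm (g x)) + L * (norm h + t * norm (g x)))"
        using L_pos t norm_triangle_ineq[of h "t *\<^sub>R g x"] norm_triangle_ineq4[of h "t *\<^sub>R g x"]
        by (intro mult_left_mono add_mono) simp_all
      also have "\<dots> = L * norm h + e"
        using L_pos ng by (simp add: t_def field_simps)
      finally show "norm (H x h) \<le> L * norm h + e" .
    qed
  qed (rule hessian_norm_bound_transversal[OF x])
qed

end

section \<open>The Eptctr iteration\<close>

definition ept_direction ::
  "(real^'n \<Rightarrow> real^'n) \<Rightarrow> (real^'n \<Rightarrow> real^'n^'n) \<Rightarrow> 'n ept_state \<Rightarrow> real^'n" where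
  "ept_direction g B st =
    (if acc st then
       (if \<bar>sp st \<bullet> yp st\<bar> > theta * (norm (sp st))\<^sup>2 \<and> kbad st < 5
        then - (H_mat (sp st) (yp st) *v g (xk st))
        else matrix_inv (B (xk st)) *v (- g (xk st)))
     else dirN st)"

definition ept_trial ::
  "(real^'n \<Rightarrow> real^'n) \<Rightarrow> (real^'n \<Rightarrow> real^'n^'n) \<Rightarrow> 'n ept_state \<Rightarrow> real^'n" where
  "ept_trial g B st = ptc_step (dtk st) (ept_direction g B st)"

definition ept_ratio ::
  "(real^'n \<Rightarrow> real) \<Rightarrow> (real^'n \<Rightarrow> real^'n) \<Rightarrow> (real^'n \<Rightarrow> real^'n^'n) \<Rightarrow> 'n ept_state \<Rightarrow> real"
  where
  "ept_ratio f g B st =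
    (f (xk st) - f (xk st + ept_trial g B st)) / model_decrease (dtk st) (g (xk st)) (ept_trial g B st)"

lemma ept_step_fields:
  fixes f :: "real^'n \<Rightarrow> real" and g :: "real^'n \<Rightarrow> real^'n" and B :: "real^'n \<Rightarrow> real^'n^'n"
    and st :: "'n ept_state"
  defines "\<rho> \<equiv> ept_ratio f g B st"
  shows "xk (ept_step f g B st) = (if eta_a < \<rho> then xk st + ept_trial g B st else xk st)"
    and "acc (ept_step f g B st) \<longleftrightarrow> eta_a < \<rho>"
    and "dtk (ept_step f g B st) =
      (if eta_2 \<le> \<bar>1 - \<rho>\<bar> then gamma_2 * dtk st
       else if eta_1 \<le> \<bar>1 - \<rho>\<bar> then dtk st else gamma_1 * dtk st)"
    and "sp (ept_step f g B st) = (if eta_a < \<rho> then ept_trial g B st else sp st)"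
    and "yp (ept_step f g B st) =
      (if eta_a < \<rho> then g (xk st + ept_trial g B st) - g (xk st) else yp st)"
    and "dirN (ept_step f g B st) = ept_direction g B st"
  unfolding \<rho>_def ept_ratio_def ept_trial_def ept_direction_def ept_step_def Let_def
    ptc_step_def model_decrease_def
  by simp_all

locale eptctr_setting =
  lipschitz_gradient_sublevel_hessian f g "f x0" L "\<lambda>x h. B x *v h"
  for f :: "real^'n \<Rightarrow> real" and g x0 L and B :: "real^'n \<Rightarrow> real^'n^'n" +
  fixes m f_low :: real
  assumes m_pos: "0 < m"
    and coercive: "\<And>x z. f x \<le> f x0 \<Longrightarrow> m * (norm z)\<^sup>2 \<le> z \<bullet> (B x *v z)"
    and bounded_below: "\<And>x. f x \<le> f x0 \<Longrightarrow> f_low \<le> f x"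
begin

abbreviation next_state :: "'n ept_state \<Rightarrow> 'n ept_state" where
  "next_state \<equiv> ept_step f g B"

definition descent_const :: real where
  "descent_const = min (1/2) (m / L\<^sup>2)"

definition dir_norm_const :: real where
  "dir_norm_const = max (1 + 2 * L / theta + 2 * (L / theta)\<^sup>2) (1 / m)"

definition safe_dt :: real where
  "safe_dt = min (1/16) (descent_const / (16 * L * dir_norm_const\<^sup>2))"

lemma descent_const_pos: "0 < descent_const"
  using m_pos L_pos by (simp add: descent_const_def)

lemma dir_norm_const_pos: "0 < dir_norm_const"
  using m_pos by (simp add: dir_norm_const_def less_max_iff_disj)

lemma safe_dt_pos: "0 < safe_dt"
  using L_pos descent_const_pos dir_norm_const_pos by (simp add: safe_dt_def)

text \<open>The bound on \<open>yp\<close> holds because accepted steps stay in the sublevel set; it keeps the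
  quasi-Newton direction gradient related.\<close>

definition ept_inv :: "'n ept_state \<Rightarrow> bool" where
  "ept_inv st \<longleftrightarrow> f (xk st) \<le> f x0 \<and> 0 < dtk st \<and> norm (yp st) \<le> L * norm (sp st)
     \<and> (\<not> acc st \<longrightarrow> gradient_related descent_const dir_norm_const (g (xk st)) (dirN st))"

lemma ept_direction_gradient_related:
  assumes inv: "ept_inv st"
  shows "gradient_related descent_const dir_norm_const (g (xk st)) (ept_direction g B st)"
proof -
  have x: "f (xk st) \<le> f x0" and y: "norm (yp st) \<le> L * norm (sp st)"
    using inv by (simp_all add: ept_inv_def)
  have quasi_newton: "gradient_related descent_const dir_norm_const v (- (H_mat (sp st) (yp st) *v v))"
    if "theta * (norm (sp st))\<^sup>2 < \<bar>sp st \<bullet> yp st\<bar>" for v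
  proof -
    have "0 < theta"
      by (simp add: theta_def)
    from gradient_related_H_mat[OF this that y] show ?thesis
      unfolding descent_const_def dir_norm_const_def
      by (rule gradient_related_mono[OF _ min.cobounded1 max.cobounded1])
  qed
  have newton:
    "gradient_related descent_const dir_norm_const (g (xk st)) (matrix_inv (B (xk st)) *v (- g (xk st)))"
  proof (cases "g (xk st) = 0")
    case False
    have "gradient_related (m / L\<^sup>2) (1 / m) (g (xk st)) (matrix_inv (B (xk st)) *v (- g (xk st)))"
      using m_pos L_pos coercive[OF x] hessian_norm_bound[OF x False] by (rule gradient_related_newton)
    then show ?thesis
      unfolding descent_const_def dir_norm_const_def
      by (rule gradient_related_mono[OF _ min.cobounded2 max.cobounded2])
  qed (simp add: gradient_related_zero_iff)
  show ?thesis
    using inv quasi_newton newton by (auto simp: ept_direction_def ept_inv_def)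
qed

lemma ept_step_accepted_decrease:
  assumes inv: "ept_inv st" and acc: "acc (next_state st)"
  shows "eta_a * (dtk st / (1 + dtk st) * descent_const * (norm (g (xk st)))\<^sup>2 / 2)
    \<le> f (xk st) - f (xk (next_state st))"
proof -
  define q where "q = model_decrease (dtk st) (g (xk st)) (ept_trial g B st)"
  define lb where "lb = dtk st / (1 + dtk st) * descent_const * (norm (g (xk st)))\<^sup>2 / 2"
  have dt: "0 < dtk st"
    using inv by (simp add: ept_inv_def)
  have lb_q: "lb \<le> q"
    unfolding lb_def q_def ept_trial_def
    using ept_direction_gradient_related[OF inv] less_imp_le[OF descent_const_pos] dt
    by (rule model_decrease_lower_bound)
  have "0 \<le> lb"
    using dt descent_const_pos by (simp add: lb_def)
  have \<rho>: "eta_a < ept_ratio f g B st"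
    using acc by (simp add: ept_step_fields)
  then have "q \<noteq> 0"
    by (auto simp: ept_ratio_def q_def eta_a_def)
  with lb_q \<open>0 \<le> lb\<close> have q: "0 < q"
    by linarith
  have "eta_a * lb \<le> eta_a * q"
    using lb_q by (simp add: eta_a_def)
  also have "\<dots> \<le> ept_ratio f g B st * q"
    using \<rho> q by simp
  also have "\<dots> = f (xk st) - f (xk (next_state st))"
    using acc q by (simp add: ept_step_fields ept_ratio_def q_def)
  finally show ?thesis
    by (simp add: lb_def)
qed

lemma ept_step_rejected:
  assumes "\<not> acc (next_state st)"
  shows "xk (next_state st) = xk st" and "dtk (next_state st) = dtk st / 2"
  using assms by (auto simp: ept_step_fields eta_a_def eta_2_def gamma_2_def)

lemma ept_step_dt_ge_half: "0 \<le> dtk st \<Longrightarrow> dtk st / 2 \<le> dtk (next_state st)"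
  by (simp add: ept_step_fields gamma_1_def gamma_2_def)

lemma ept_step_safe_dt:
  assumes inv: "ept_inv st" and g0: "g (xk st) \<noteq> 0" and small: "dtk st \<le> safe_dt"
  shows "acc (next_state st)" and "dtk st \<le> dtk (next_state st)"
proof -
  have x: "f (xk st) \<le> f x0" and dt: "0 < dtk st"
    using inv by (simp_all add: ept_inv_def)
  have "dtk st \<le> 1/16" "L * (dir_norm_const\<^sup>2 / descent_const) * dtk st \<le> 1/16"
    using small L_pos descent_const_pos dir_norm_const_pos by (simp_all add: safe_dt_def field_simps)
  from ptc_ratio_close_to_one[OF x ept_direction_gradient_related[OF inv] descent_const_pos g0 dt this]
  have "\<bar>1 - ept_ratio f g B st\<bar> < 1/4"
    by (simp add: ept_ratio_def ept_trial_def)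
  moreover from this have "3/4 < ept_ratio f g B st"
    unfolding abs_less_iff by linarith
  ultimately show "acc (next_state st)" and "dtk st \<le> dtk (next_state st)"
    using dt by (auto simp: ept_step_fields eta_a_def eta_1_def eta_2_def gamma_1_def)
qed

lemma ept_step_f_le:
  assumes inv: "ept_inv st"
  shows "f (xk (next_state st)) \<le> f (xk st)"
proof (cases "acc (next_state st)")
  case True
  have "0 \<le> eta_a * (dtk st / (1 + dtk st) * descent_const * (norm (g (xk st)))\<^sup>2 / 2)"
    using inv descent_const_pos by (simp add: ept_inv_def eta_a_def)
  then show ?thesis
    using ept_step_accepted_decrease[OF inv True] by linarith
qed (simp add: ept_step_rejected)

lemma ept_inv_step:
  assumes inv: "ept_inv st"
  shows "ept_inv (next_state st)"
proof -
  have x: "f (xk st) \<le> f x0" and dt: "0 < dtk st" and y: "norm (yp st) \<le> L * norm (sp st)"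
    using inv by (simp_all add: ept_inv_def)
  have x': "f (xk (next_state st)) \<le> f x0"
    using ept_step_f_le[OF inv] x by simp
  moreover have "0 < dtk (next_state st)"
    using ept_step_dt_ge_half[of st] dt by simp
  moreover have "norm (yp (next_state st)) \<le> L * norm (sp (next_state st))"
  proof (cases "acc (next_state st)")
    case True
    with x' have "f (xk st + ept_trial g B st) \<le> f x0"
      by (simp add: ept_step_fields)
    from lipschitz[OF this x] True show ?thesis
      by (simp add: ept_step_fields)
  next
    case False
    with y show ?thesis
      by (simp add: ept_step_fields)
  qed
  moreover have "gradient_related descent_const dir_norm_const (g (xk (next_state st))) (dirN (next_state st))"
    if "\<not> acc (next_state st)"
    using ept_direction_gradient_related[OF inv] ept_step_rejected[OF that]
    by (simp add: ept_step_fields)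
  ultimately show ?thesis
    by (simp add: ept_inv_def)
qed

definition ept_seq :: "nat \<Rightarrow> 'n ept_state" where
  "ept_seq k = (next_state ^^ k) (ept_init x0)"

lemma ept_seq_Suc: "ept_seq (Suc k) = next_state (ept_seq k)"
  by (simp add: ept_seq_def)

lemma ept_inv_seq: "ept_inv (ept_seq k)"
proof (induction k)
  case 0
  show ?case
    by (simp add: ept_seq_def ept_init_def ept_inv_def dt_init_def)
next
  case (Suc k)
  then show ?case
    by (simp add: ept_seq_Suc ept_inv_step)
qed

lemma decseq_f_ept_seq: "decseq (\<lambda>k. f (xk (ept_seq k)))"
  by (rule decseq_SucI) (simp add: ept_seq_Suc ept_step_f_le ept_inv_seq)

lemma ept_seq_dt_lower_bound:
  assumes g0: "\<And>k. K \<le> k \<Longrightarrow> g (xk (ept_seq k)) \<noteq> 0"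
  obtains D where "0 < D" and "\<And>k. K \<le> k \<Longrightarrow> D \<le> dtk (ept_seq k)"
proof -
  define D where "D = min (dtk (ept_seq K)) (safe_dt / 2)"
  have "0 < D"
    using ept_inv_seq[of K] safe_dt_pos by (simp add: D_def ept_inv_def)
  moreover have "D \<le> dtk (ept_seq k)" if "K \<le> k" for k
    using that
  proof (induction k rule: dec_induct)
    case (step k)
    show ?case
    proof (cases "dtk (ept_seq k) \<le> safe_dt")
      case True
      with step ept_step_safe_dt(2)[OF ept_inv_seq g0[OF step(1)]] show ?thesis
        by (simp add: ept_seq_Suc)
    next
      case False
      with ept_step_dt_ge_half[of "ept_seq k"] ept_inv_seq[of k] show ?thesis
        by (simp add: ept_seq_Suc D_def ept_inv_def)
    qed
  qed (simp add: D_def)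
  ultimately show thesis
    using that by blast
qed

lemma ept_seq_frequently_accepted:
  assumes g0: "\<And>k. K \<le> k \<Longrightarrow> g (xk (ept_seq k)) \<noteq> 0" and "K \<le> k"
  shows "\<exists>j\<ge>k. acc (ept_seq (Suc j))"
proof (rule ccontr)
  assume "\<not> ?thesis"
  then have rejected: "\<not> acc (next_state (ept_seq j))" if "k \<le> j" for j
    using that by (auto simp: ept_seq_Suc)
  have large: "safe_dt < dtk (ept_seq j)" if "k \<le> j" for j
    using ept_step_safe_dt(1)[OF ept_inv_seq g0] rejected[OF that] that \<open>K \<le> k\<close>
    by (meson order.trans not_le)
  have halving: "dtk (ept_seq (k + n)) = dtk (ept_seq k) / 2 ^ n" for n
    by (induction n) (simp_all add: ept_seq_Suc ept_step_rejected(2) rejected)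
  obtain n where "dtk (ept_seq k) / safe_dt < 2 ^ n"
    using real_arch_pow[of 2] by auto
  then have "dtk (ept_seq (k + n)) < safe_dt"
    using safe_dt_pos by (simp add: halving field_simps)
  with large[of "k + n"] show False
    by simp
qed

lemma ept_seq_gradient_frequently_small:
  assumes \<epsilon>: "0 < \<epsilon>"
  shows "\<exists>k\<ge>K. norm (g (xk (ept_seq k))) < \<epsilon>"
proof (rule ccontr)
  assume "\<not> ?thesis"
  then have large: "\<epsilon> \<le> norm (g (xk (ept_seq k)))" if "K \<le> k" for k
    using that by (auto simp: not_less)
  with \<epsilon> have g0: "g (xk (ept_seq k)) \<noteq> 0" if "K \<le> k" for k
    using that by fastforce
  obtain D where D: "0 < D" "\<And>k. K \<le> k \<Longrightarrow> D \<le> dtk (ept_seq k)"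
    using ept_seq_dt_lower_bound[OF g0] by blast
  define \<Delta> where "\<Delta> = eta_a * descent_const / 2 * (D / (1 + D) * \<epsilon>\<^sup>2)"
  have "0 < \<Delta>"
    using D(1) descent_const_pos \<epsilon> by (simp add: \<Delta>_def eta_a_def)
  then obtain K' where K': "\<And>k. K' \<le> k \<Longrightarrow> f (xk (ept_seq k)) - f (xk (ept_seq (Suc k))) < \<Delta>"
    using decseq_bdd_below_eventually_small_decrease[OF decseq_f_ept_seq] bounded_below ept_inv_seq
    by (metis ept_inv_def)
  obtain j where j: "max K K' \<le> j" "acc (next_state (ept_seq j))"
    using ept_seq_frequently_accepted[OF g0 max.cobounded1] unfolding ept_seq_Suc by blast
  define dt where "dt = dtk (ept_seq j)"
  have "D \<le> dt"
    using D(2)[of j] j(1) by (simp add: dt_def)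
  with D(1) have "D / (1 + D) \<le> dt / (1 + dt)"
    by (simp add: frac_le divide_le_eq field_simps)
  moreover have "\<epsilon>\<^sup>2 \<le> (norm (g (xk (ept_seq j))))\<^sup>2"
    using large j \<epsilon> by (intro power_mono) simp_all
  ultimately have "D / (1 + D) * \<epsilon>\<^sup>2 \<le> dt / (1 + dt) * (norm (g (xk (ept_seq j))))\<^sup>2"
    using D(1) \<open>D \<le> dt\<close> by (intro mult_mono) simp_all
  then have "\<Delta> \<le> eta_a * descent_const / 2 * (dt / (1 + dt) * (norm (g (xk (ept_seq j))))\<^sup>2)"
    unfolding \<Delta>_def using descent_const_pos by (intro mult_left_mono) (simp_all add: eta_a_def)
  also have "\<dots> = eta_a * (dt / (1 + dt) * descent_const * (norm (g (xk (ept_seq j))))\<^sup>2 / 2)"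
    by (simp add: algebra_simps)
  also have "\<dots> \<le> f (xk (ept_seq j)) - f (xk (ept_seq (Suc j)))"
    using ept_step_accepted_decrease[OF ept_inv_seq j(2)] by (simp add: dt_def ept_seq_Suc)
  finally show False
    using K'[of j] j(1) by simp
qed

lemma liminf_norm_gradient_ept_seq: "liminf (\<lambda>k. ereal (norm (g (xk (ept_seq k))))) = 0"
  by (rule liminf_ereal_eq_0I) (simp_all add: ept_seq_gradient_frequently_small)

end

theorem theorem1:
  fixes f :: "real^'n \<Rightarrow> real"
    and g :: "real^'n \<Rightarrow> real^'n"
    and B :: "real^'n \<Rightarrow> real^'n^'n"
    and x0 :: "real^'n"
    and L m M :: real
  assumes grad: "\<And>x. GDERIV f x :> g x"
    and hess: "\<And>x. (g has_derivative (\<lambda>h. B x *v h)) (at x)"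
    and hess_cont: "continuous_on UNIV B"
    and lip: "\<forall>x\<in>{x. f x \<le> f x0}. \<forall>y\<in>{x. f x \<le> f x0}. norm (g x - g y) \<le> L * norm (x - y)"
    and mpos: "0 < m" and mM: "m \<le> M"
    and bounds: "\<forall>x\<in>{x. f x \<le> f x0}. \<forall>z.
                   m * (norm z)\<^sup>2 \<le> z \<bullet> (B x *v z) \<and> z \<bullet> (B x *v z) \<le> M * (norm z)\<^sup>2"
    and below: "\<exists>c. \<forall>x\<in>{x. f x \<le> f x0}. c \<le> f x"
  shows "liminf (\<lambda>k. ereal (norm (g (eptctr_iter f g B x0 k)))) = 0"
proof -
  obtain f_low where f_low: "\<And>x. f x \<le> f x0 \<Longrightarrow> f_low \<le> f x"
    using below by blast
  have lip': "norm (g x - g y) \<le> max L 1 * norm (x - y)" if "f x \<le> f x0" "f y \<le> f x0" for x y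
  proof -
    have "norm (g x - g y) \<le> L * norm (x - y)"
      using lip that by simp
    also have "\<dots> \<le> max L 1 * norm (x - y)"
      by (intro mult_right_mono) simp_all
    finally show ?thesis .
  qed
  interpret eptctr_setting f g x0 "max L 1" B m f_low
    using grad hess lip' mpos bounds f_low by unfold_locales auto
  have "eptctr_iter f g B x0 = (\<lambda>k. xk (ept_seq k))"
    by (simp add: fun_eq_iff eptctr_iter_def ept_seq_def)
  with liminf_norm_gradient_ept_seq show ?thesis
    by simp
qed

end
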